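(* Let $X$ be a scalar random variable with distribution $\pi$ and upper bound $\ell\in\mathbb{R}$ such that $\mathbb{P}_\pi[X\le\ell]=1$. Let $\alpha\in(0,1]$, $\epsilon\in[0,1]$, and define \[ L(x,\mu,t)=t\left(\mu+e^{\frac{x}{t}-\mu-\ln(\alpha)-1}\right),\qquad u_b(\mu,t)=L(\ell,\mu,t). \] For $N$ independent samples $x_1,\dots,x_N$ of $X$, let $\zeta^*_N(\mu,t)=\max_{1\le k\le N}L(x_k,\mu,t)$. Then \[ \mathbb{P}^N_{\pi}\left[\mathrm{EVaR}_\alpha(X)\le \inf_{\mu\in\mathbb{R},\ t>0}\zeta^*_N(\mu,t)(1-\epsilon)+u_b(\mu,t)\epsilon\right]\ge 1-(1-\epsilon)^N. \]
   Context: The Entropic-Value-at-Risk at level $\alpha\in(0,1]$ is $\mathrm{EVaR}_\alpha(X)=\inf_{z>0}\frac{1}{z}\ln\left(\frac{\mathbb{E}_\pi[e^{zX}]}{\alpha}\right)$. $\zeta^*_N(\mu,t)$ is the solution of $\min_\zeta\zeta$ subject to $\zeta\ge L(x_i,\mu,t)$ for all $i$. $\mathbb{P}^N_\pi$ is the $N$-fold product measure governing the i.i.d. sample. *)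

theory Defs
  imports "HOL-Probability.Probability"
begin

definition EVaR :: "real \<Rightarrow> real measure \<Rightarrow> ereal" where
  "EVaR \<alpha> M = (INF z\<in>{0<..}. ereal ((1 / z) * ln ((\<integral>x. exp (z * x) \<partial>M) / \<alpha>)))"

definition Lfun :: "real \<Rightarrow> real \<Rightarrow> real \<Rightarrow> real \<Rightarrow> real" where
  "Lfun \<alpha> x \<mu> t = t * (\<mu> + exp (x / t - \<mu> - ln \<alpha> - 1))"

definition zeta_star :: "real \<Rightarrow> nat \<Rightarrow> (nat \<Rightarrow> real) \<Rightarrow> real \<Rightarrow> real \<Rightarrow> real" where
  "zeta_star \<alpha> N xs \<mu> t = Max ((\<lambda>k. Lfun \<alpha> (xs k) \<mu> t) ` {..<N})"

end

theory Submission
  imports Defs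
begin

text \<open>For \<open>t > 0\<close> and any \<open>\<mu>\<close>, taking \<open>z = 1/t\<close> in the definition of the EVaR and using
  \<open>ln c \<le> \<mu> + exp (-\<mu> - 1) c\<close> gives \<open>EVaR\<^sub>\<alpha>(X) \<le> E[L(X,\<mu>,t)]\<close>. As \<open>L\<close> is increasing in \<open>x\<close>
  and \<open>X \<le> l\<close> almost surely, \<open>E[L(X,\<mu>,t)] \<le> (1 - \<epsilon>) L(m,\<mu>,t) + \<epsilon> L(l,\<mu>,t)\<close> whenever
  \<open>P(X > m) \<le> \<epsilon>\<close>. For \<open>m\<close> the sample maximum, \<open>\<zeta>\<^sup>*\<^sub>N = L(m,\<mu>,t)\<close>, and the tail condition
  fails only if all \<open>N\<close> samples fall below a \<open>(1 - \<epsilon>)\<close>-quantile of \<open>X\<close>, which happens with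
  probability at most \<open>(1 - \<epsilon>)\<^sup>N\<close>.\<close>

lemma Lfun_mono:
  assumes "0 < t" and "x \<le> y"
  shows "Lfun \<alpha> x \<mu> t \<le> Lfun \<alpha> y \<mu> t"
  unfolding Lfun_def using assms by (intro mult_left_mono add_left_mono) (auto intro: divide_right_mono)

lemma Lfun_eq_affine_exp:
  assumes "0 < \<alpha>"
  shows "Lfun \<alpha> x \<mu> t = t * \<mu> + t * exp (- \<mu> - 1) / \<alpha> * exp (x / t)"
  unfolding Lfun_def using assms by (simp add: exp_diff exp_add exp_minus field_simps)

lemma zeta_star_eq_Lfun_Max:
  assumes "0 < N" and "0 < t"
  shows "zeta_star \<alpha> N xs \<mu> t = Lfun \<alpha> (Max (xs ` {..<N})) \<mu> t"
proof -
  have "mono (\<lambda>x. Lfun \<alpha> x \<mu> t)"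
    using Lfun_mono[OF \<open>0 < t\<close>] by (auto simp: mono_def)
  then have "Lfun \<alpha> (Max (xs ` {..<N})) \<mu> t = Max ((\<lambda>x. Lfun \<alpha> x \<mu> t) ` xs ` {..<N})"
    by (rule mono_Max_commute) (use assms in auto)
  then show ?thesis
    unfolding zeta_star_def by (simp add: image_image)
qed

text \<open>Equality holds at \<open>\<mu> = ln C - 1\<close>.\<close>
lemma ln_le_plus_exp_mult:
  fixes C \<mu> :: real
  assumes "0 < C"
  shows "ln C \<le> \<mu> + exp (- \<mu> - 1) * C"
proof -
  have "1 + (ln C - \<mu> - 1) \<le> exp (ln C - \<mu> - 1)"
    by (rule exp_ge_add_one_self)
  also have "\<dots> = exp (- \<mu> - 1) * C"
    using assms by (simp add: exp_diff exp_minus exp_add field_simps)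
  finally show ?thesis by simp
qed

lemma (in prob_space) integral_exp_pos:
  fixes f :: "'a \<Rightarrow> real"
  assumes "integrable M (\<lambda>x. exp (f x))"
  shows "0 < (\<integral>x. exp (f x) \<partial>M)"
proof -
  have "(\<integral>x. exp (f x) \<partial>M) \<noteq> 0"
  proof
    assume "(\<integral>x. exp (f x) \<partial>M) = 0"
    then have "AE x in M. exp (f x) = 0"
      using integral_nonneg_eq_0_iff_AE[OF assms] by simp
    then show False by simp
  qed
  moreover have "0 \<le> (\<integral>x. exp (f x) \<partial>M)"
    by (intro integral_nonneg_AE) simp
  ultimately show ?thesis by linarith
qed

lemma EVaR_le_integral_Lfun:
  fixes M :: "real measure"
  assumes "prob_space M" and int: "integrable M (\<lambda>x. exp (x / t))"
    and "0 < \<alpha>" and "0 < t"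
  shows "EVaR \<alpha> M \<le> ereal (\<integral>x. Lfun \<alpha> x \<mu> t \<partial>M)"
proof -
  interpret prob_space M by fact
  define c where "c = (\<integral>x. exp (x / t) \<partial>M)"
  have "0 < c"
    unfolding c_def using integral_exp_pos[OF int] .
  have "EVaR \<alpha> M \<le> ereal (1 / (1 / t) * ln ((\<integral>x. exp (1 / t * x) \<partial>M) / \<alpha>))"
    unfolding EVaR_def using \<open>0 < t\<close> by (intro INF_lower) auto
  also have "1 / (1 / t) * ln ((\<integral>x. exp (1 / t * x) \<partial>M) / \<alpha>) = t * ln (c / \<alpha>)"
    unfolding c_def by simp
  also have "t * ln (c / \<alpha>) \<le> t * (\<mu> + exp (- \<mu> - 1) * (c / \<alpha>))"
    using \<open>0 < t\<close> \<open>0 < c\<close> \<open>0 < \<alpha>\<close> ln_le_plus_exp_mult[of "c / \<alpha>" \<mu>] by simp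
  also have "\<dots> = (\<integral>x. Lfun \<alpha> x \<mu> t \<partial>M)"
    unfolding Lfun_eq_affine_exp[OF \<open>0 < \<alpha>\<close>] c_def using int prob_space
    by (simp add: algebra_simps)
  finally show ?thesis by simp
qed

lemma (in real_distribution) integral_mono_fun_le_tail_mixture:
  fixes f :: "real \<Rightarrow> real"
  assumes "integrable M f" and "mono f"
    and "AE x in M. x \<le> l" and "m \<le> l" and "measure M {m<..} \<le> \<epsilon>"
  shows "(\<integral>x. f x \<partial>M) \<le> f m * (1 - \<epsilon>) + f l * \<epsilon>"
proof -
  define A where "A = {m<..}"
  have A: "A \<in> sets M"
    unfolding A_def by simp
  have "(\<integral>x. f x \<partial>M) \<le> (\<integral>x. f m + (f l - f m) * indicator A x \<partial>M)"
  proof (rule integral_mono_AE[OF \<open>integrable M f\<close>])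
    show "integrable M (\<lambda>x. f m + (f l - f m) * indicator A x)"
      using A by (auto simp: emeasure_eq_measure)
    show "AE x in M. f x \<le> f m + (f l - f m) * indicator A x"
      using \<open>AE x in M. x \<le> l\<close> by eventually_elim
        (use \<open>mono f\<close> in \<open>auto simp: A_def indicator_def mono_def\<close>)
  qed
  also have "\<dots> = f m + (f l - f m) * measure M A"
    using A by (simp add: emeasure_eq_measure prob_space[unfolded space_eq_univ])
  also have "\<dots> \<le> f m + (f l - f m) * \<epsilon>"
    using assms(2,4,5) unfolding A_def by (intro add_left_mono mult_left_mono) (auto simp: mono_def)
  finally show ?thesis by (simp add: algebra_simps)
qed

lemma EVaR_le_Lfun_tail_mixture:
  fixes \<pi> :: "real measure"
  assumes "real_distribution \<pi>" and "AE x in \<pi>. x \<le> l"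
    and "0 < \<alpha>" and "0 < t" and "m \<le> l" and "measure \<pi> {m<..} \<le> \<epsilon>"
  shows "EVaR \<alpha> \<pi> \<le> ereal (Lfun \<alpha> m \<mu> t * (1 - \<epsilon>) + Lfun \<alpha> l \<mu> t * \<epsilon>)"
proof -
  interpret real_distribution \<pi> by fact
  have int: "integrable \<pi> (\<lambda>x. exp (x / t))"
  proof (rule Bochner_Integration.integrable_bound[of _ "\<lambda>_. exp (l / t)"])
    show "AE x in \<pi>. norm (exp (x / t)) \<le> norm (exp (l / t))"
      using assms(2) by eventually_elim (use \<open>0 < t\<close> in \<open>auto intro: divide_right_mono\<close>)
  qed auto
  have "EVaR \<alpha> \<pi> \<le> ereal (\<integral>x. Lfun \<alpha> x \<mu> t \<partial>\<pi>)"
    by (rule EVaR_le_integral_Lfun[OF prob_space_axioms int \<open>0 < \<alpha>\<close> \<open>0 < t\<close>])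
  also have "(\<integral>x. Lfun \<alpha> x \<mu> t \<partial>\<pi>) \<le> Lfun \<alpha> m \<mu> t * (1 - \<epsilon>) + Lfun \<alpha> l \<mu> t * \<epsilon>"
  proof (rule integral_mono_fun_le_tail_mixture)
    show "integrable \<pi> (\<lambda>x. Lfun \<alpha> x \<mu> t)"
      unfolding Lfun_eq_affine_exp[OF \<open>0 < \<alpha>\<close>] using int by simp
    show "mono (\<lambda>x. Lfun \<alpha> x \<mu> t)"
      using Lfun_mono[OF \<open>0 < t\<close>] by (auto simp: mono_def)
  qed (use assms in auto)
  finally show ?thesis by simp
qed

definition EVaR_mixture_bound :: "real \<Rightarrow> real \<Rightarrow> real \<Rightarrow> real \<Rightarrow> ereal" where
  "EVaR_mixture_bound \<alpha> l \<epsilon> m = (INF p\<in>{p :: real \<times> real. 0 < snd p}.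
     ereal (Lfun \<alpha> m (fst p) (snd p) * (1 - \<epsilon>) + Lfun \<alpha> l (fst p) (snd p) * \<epsilon>))"

lemma mono_EVaR_mixture_bound:
  assumes "\<epsilon> \<le> 1"
  shows "mono (EVaR_mixture_bound \<alpha> l \<epsilon>)"
proof (rule monoI)
  fix x y :: real assume "x \<le> y"
  show "EVaR_mixture_bound \<alpha> l \<epsilon> x \<le> EVaR_mixture_bound \<alpha> l \<epsilon> y"
    unfolding EVaR_mixture_bound_def
  proof (rule INF_mono)
    fix p :: "real \<times> real" assume "p \<in> {p. 0 < snd p}"
    then show "\<exists>q\<in>{p. 0 < snd p}.
        ereal (Lfun \<alpha> x (fst q) (snd q) * (1 - \<epsilon>) + Lfun \<alpha> l (fst q) (snd q) * \<epsilon>)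
        \<le> ereal (Lfun \<alpha> y (fst p) (snd p) * (1 - \<epsilon>) + Lfun \<alpha> l (fst p) (snd p) * \<epsilon>)"
      using Lfun_mono[of "snd p" x y \<alpha> "fst p"] \<open>x \<le> y\<close> assms
      by (intro bexI[of _ p]) (auto intro: mult_right_mono)
  qed
qed

lemma INF_zeta_star_eq_EVaR_mixture_bound:
  assumes "0 < N"
  shows "(INF p\<in>{p :: real \<times> real. 0 < snd p}.
      ereal (zeta_star \<alpha> N xs (fst p) (snd p) * (1 - \<epsilon>) + Lfun \<alpha> l (fst p) (snd p) * \<epsilon>))
    = EVaR_mixture_bound \<alpha> l \<epsilon> (Max (xs ` {..<N}))"
  unfolding EVaR_mixture_bound_def using assms
  by (intro INF_cong) (auto simp: zeta_star_eq_Lfun_Max)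

lemma EVaR_le_EVaR_mixture_bound:
  fixes \<pi> :: "real measure"
  assumes "real_distribution \<pi>" and "AE x in \<pi>. x \<le> l"
    and "0 < \<alpha>" and "m \<le> l" and "measure \<pi> {m<..} \<le> \<epsilon>"
  shows "EVaR \<alpha> \<pi> \<le> EVaR_mixture_bound \<alpha> l \<epsilon> m"
  unfolding EVaR_mixture_bound_def using EVaR_le_Lfun_tail_mixture[OF assms(1-3) _ assms(4,5)]
  by (auto intro!: INF_greatest)

lemma (in real_distribution) exists_quantile:
  assumes "0 \<le> \<epsilon>" and "\<epsilon> < 1" and "measure M {..l} = 1"
  obtains q where "measure M {..<q} \<le> 1 - \<epsilon>" and "measure M {q<..} \<le> \<epsilon>"
proof -
  define Q where "Q = {x. 1 - \<epsilon> \<le> cdf M x}"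
  define q where "q = Inf Q"
  have "l \<in> Q"
    using assms unfolding Q_def cdf_def by simp
  then have "Q \<noteq> {}" by auto
  have "eventually (\<lambda>x. cdf M x < 1 - \<epsilon>) at_bot"
    using cdf_lim_at_bot \<open>\<epsilon> < 1\<close> by (intro order_tendstoD(2)) auto
  then obtain b where b: "\<And>x. x \<le> b \<Longrightarrow> cdf M x < 1 - \<epsilon>"
    unfolding eventually_at_bot_linorder by blast
  have "bdd_below Q"
    unfolding bdd_below_def Q_def using b by (metis linorder_not_le mem_Collect_eq less_imp_le)
  have "1 - \<epsilon> \<le> cdf M q"
  proof (rule tendsto_le[of "at_right q"])
    show "(cdf M \<longlongrightarrow> cdf M q) (at_right q)"
      using cdf_is_right_cont[of q] by (simp add: continuous_within)
    show "eventually (\<lambda>x. 1 - \<epsilon> \<le> cdf M x) (at_right q)"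
      unfolding eventually_at_right_field
    proof (intro exI[of _ "q + 1"] conjI allI impI)
      fix y assume "q < y" "y < q + 1"
      then obtain z where "z \<in> Q" "z < y"
        using cInf_lessD[OF \<open>Q \<noteq> {}\<close>] unfolding q_def by blast
      then show "1 - \<epsilon> \<le> cdf M y"
        unfolding Q_def using cdf_nondecreasing[of z y] by auto
    qed simp
  qed simp_all
  moreover have "measure M {q<..} = 1 - measure M {..q}"
    using prob_compl[of "{..q}"] by (simp add: Compl_eq_Diff_UNIV[symmetric] Compl_atMost)
  ultimately have "measure M {q<..} \<le> \<epsilon>"
    unfolding cdf_def by simp
  moreover have "measure M {..<q} \<le> 1 - \<epsilon>"
  proof (rule tendsto_le[of "at_left q"])
    show "(cdf M \<longlongrightarrow> measure M {..<q}) (at_left q)"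
      by (rule cdf_at_left)
    show "eventually (\<lambda>x. cdf M x \<le> 1 - \<epsilon>) (at_left q)"
      unfolding eventually_at_left_field
    proof (intro exI[of _ "q - 1"] conjI allI impI)
      fix y assume "q - 1 < y" "y < q"
      then have "y \<notin> Q"
        using cInf_lower[OF _ \<open>bdd_below Q\<close>] unfolding q_def by force
      then show "cdf M y \<le> 1 - \<epsilon>"
        unfolding Q_def by auto
    qed simp
  qed simp_all
  ultimately show ?thesis using that by blast
qed

lemma measure_PiM_all_in:
  assumes "prob_space M" and "finite I" and "A \<in> sets M"
  shows "measure (PiM I (\<lambda>_. M)) {xs \<in> space (PiM I (\<lambda>_. M)). \<forall>i\<in>I. xs i \<in> A}
    = measure M A ^ card I"
proof -
  interpret M: prob_space M by fact
  interpret product_prob_space "\<lambda>_. M" I by unfold_locales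
  interpret P: prob_space "PiM I (\<lambda>_. M)"
    by (rule prob_space_PiM) (use assms(1) in simp)
  have "emeasure (PiM I (\<lambda>_. M)) {xs \<in> space (PiM I (\<lambda>_. M)). \<forall>i\<in>I. xs i \<in> A}
      = (\<Prod>i\<in>I. emeasure M A)"
    by (rule emeasure_PiM_Collect) (use assms in auto)
  then show ?thesis
    using assms(1) by (simp add: P.emeasure_eq_measure M.emeasure_eq_measure ennreal_power)
qed

lemma prob_tail_beyond_sample_Max:
  fixes \<pi> :: "real measure" and N :: nat
  defines "PM \<equiv> PiM {..<N} (\<lambda>_. \<pi>)"
  assumes "real_distribution \<pi>" and "measure \<pi> {..l} = 1"
    and "0 \<le> \<epsilon>" and "\<epsilon> \<le> 1" and "S \<in> sets PM"
    and S: "\<And>xs. xs \<in> space PM \<Longrightarrow> \<forall>i<N. xs i \<le> l \<Longrightarrow>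
      measure \<pi> {Max (xs ` {..<N})<..} \<le> \<epsilon> \<Longrightarrow> xs \<in> S"
  shows "1 - (1 - \<epsilon>) ^ N \<le> measure PM S"
proof -
  interpret real_distribution \<pi> by fact
  interpret P: prob_space PM
    unfolding PM_def by (rule prob_space_PiM) (rule prob_space_axioms)
  define G where "G = {xs \<in> space PM. \<forall>i\<in>{..<N}. xs i \<in> {..l}}"
  have "G \<in> sets PM"
    unfolding G_def PM_def by measurable
  have "measure PM G = 1"
    unfolding G_def PM_def using measure_PiM_all_in[OF prob_space_axioms, of "{..<N}" "{..l}"]
      \<open>measure \<pi> {..l} = 1\<close> by simp
  obtain B where "B \<in> sets PM" and "measure PM B \<le> (1 - \<epsilon>) ^ N" and "G - B \<subseteq> S"
  proof (cases "\<epsilon> = 1")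
    case True
    show ?thesis
      by (rule that[of "{}"]) (use S True in \<open>auto simp: G_def\<close>)
  next
    case False
    obtain q where q: "measure \<pi> {..<q} \<le> 1 - \<epsilon>" "measure \<pi> {q<..} \<le> \<epsilon>"
      using exists_quantile[of \<epsilon> l] False assms(3-5) by auto
    define B where "B = {xs \<in> space PM. \<forall>i\<in>{..<N}. xs i \<in> {..<q}}"
    show ?thesis
    proof (rule that[of B])
      show "B \<in> sets PM"
        unfolding B_def PM_def by measurable
      have "measure PM B = measure \<pi> {..<q} ^ N"
        unfolding B_def PM_def using measure_PiM_all_in[OF prob_space_axioms, of "{..<N}" "{..<q}"]
        by simp
      also have "\<dots> \<le> (1 - \<epsilon>) ^ N"
        using q(1) by (intro power_mono) auto
      finally show "measure PM B \<le> (1 - \<epsilon>) ^ N" .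
    next
      show "G - B \<subseteq> S"
      proof
        fix xs assume xs: "xs \<in> G - B"
        then obtain i where "i < N" "q \<le> xs i"
          unfolding B_def G_def by (auto simp: not_less)
        then have "q \<le> Max (xs ` {..<N})"
          by (intro order_trans[OF _ Max_ge]) auto
        then have "measure \<pi> {Max (xs ` {..<N})<..} \<le> measure \<pi> {q<..}"
          by (intro finite_measure_mono) auto
        with q(2) xs show "xs \<in> S"
          by (intro S) (auto simp: G_def)
      qed
    qed
  qed
  have "measure PM G \<le> measure PM (B \<union> G)"
    by (intro P.finite_measure_mono) (use \<open>B \<in> sets PM\<close> \<open>G \<in> sets PM\<close> in auto)
  also have "\<dots> = measure PM B + measure PM (G - B)"
    by (rule P.finite_measure_Union') fact+
  also have "measure PM (G - B) \<le> measure PM S"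
    by (intro P.finite_measure_mono \<open>G - B \<subseteq> S\<close> \<open>S \<in> sets PM\<close>)
  finally show ?thesis
    using \<open>measure PM G = 1\<close> \<open>measure PM B \<le> (1 - \<epsilon>) ^ N\<close> by simp
qed

lemma sets_borel_Collect_le_mono:
  fixes g :: "real \<Rightarrow> 'a :: linorder"
  assumes "mono g"
  shows "{y. c \<le> g y} \<in> sets borel"
proof -
  have "mono (indicator {y. c \<le> g y} :: real \<Rightarrow> real)"
    using assms unfolding mono_def indicator_def by (auto intro: order_trans)
  then have "(indicator {y. c \<le> g y} :: real \<Rightarrow> real) \<in> borel_measurable borel"
    by (rule borel_measurable_mono)
  then show ?thesis
    by (simp add: borel_measurable_indicator_iff)
qed

theorem corollary4:
  fixes \<pi> :: "real measure" and l \<alpha> \<epsilon> :: real and N :: nat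
  assumes "prob_space \<pi>"
    and "sets \<pi> = sets borel"
    and "measure \<pi> {x \<in> space \<pi>. x \<le> l} = 1"
    and "0 < \<alpha>" and "\<alpha> \<le> 1"
    and "0 \<le> \<epsilon>" and "\<epsilon> \<le> 1"
  shows "measure (PiM {..<N} (\<lambda>_. \<pi>))
           {xs \<in> space (PiM {..<N} (\<lambda>_. \<pi>)).
              EVaR \<alpha> \<pi> \<le> (INF p\<in>{p :: real \<times> real. 0 < snd p}.
                 ereal (zeta_star \<alpha> N xs (fst p) (snd p) * (1 - \<epsilon>)
                        + Lfun \<alpha> l (fst p) (snd p) * \<epsilon>))}
         \<ge> 1 - (1 - \<epsilon>) ^ N"
proof (cases "N = 0")
  case True
  then show ?thesis by simp
next
  case False
  have \<pi>: "real_distribution \<pi>"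
    using assms(1,2) by (simp add: real_distribution_def real_distribution_axioms_def)
  then interpret real_distribution \<pi> .
  have l: "measure \<pi> {..l} = 1"
    using assms(3) by (simp add: atMost_def)
  have EVaR_le: "EVaR \<alpha> \<pi> \<le> EVaR_mixture_bound \<alpha> l \<epsilon> m"
    if "m \<le> l" and "measure \<pi> {m<..} \<le> \<epsilon>" for m
    by (rule EVaR_le_EVaR_mixture_bound[OF \<pi> AE_prob_1[OF l, simplified] \<open>0 < \<alpha>\<close> that])
  define bound where "bound = EVaR_mixture_bound \<alpha> l \<epsilon>"
  have "(\<lambda>xs. Max (xs ` {..<N})) \<in> borel_measurable (PiM {..<N} (\<lambda>_. \<pi>))"
    by measurable
  from measurable_sets[OF this sets_borel_Collect_le_mono[OF mono_EVaR_mixture_bound[OF \<open>\<epsilon> \<le> 1\<close>],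
      where c = "EVaR \<alpha> \<pi>"]]
  have "{xs \<in> space (PiM {..<N} (\<lambda>_. \<pi>)). EVaR \<alpha> \<pi> \<le> bound (Max (xs ` {..<N}))}
      \<in> sets (PiM {..<N} (\<lambda>_. \<pi>))"
    by (simp add: bound_def vimage_def Int_def conj_commute)
  then have "1 - (1 - \<epsilon>) ^ N \<le> measure (PiM {..<N} (\<lambda>_. \<pi>))
      {xs \<in> space (PiM {..<N} (\<lambda>_. \<pi>)). EVaR \<alpha> \<pi> \<le> bound (Max (xs ` {..<N}))}"
    using False by (intro prob_tail_beyond_sample_Max[OF \<pi> l assms(6,7)])
      (auto simp: bound_def Max_le_iff lessThan_empty_iff intro!: EVaR_le)
  then show ?thesis
    using INF_zeta_star_eq_EVaR_mixture_bound[of N] False by (simp add: bound_def)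
qed

end
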